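(* Let $\mathfrak{W}$ be the Witt algebra and let $\bigwedge^2\mathfrak{W}$ carry the $\mathfrak{W}$-module structure induced by the adjoint action. Then the first Chevalley–Eilenberg cohomology vanishes: $$H^1\big(\mathfrak{W},\textstyle\bigwedge^2\mathfrak{W}\big)=\{0\}.$$ Equivalently: for every linear map $\delta:\mathfrak{W}\to\bigwedge^2\mathfrak{W}$ satisfying $$\delta([x,y]) = x\cdot\delta(y) - y\cdot\delta(x)\quad\text{for all } x,y\in\mathfrak{W},$$ there exists $r\in\bigwedge^2\mathfrak{W}$ such that $\delta(x)=x\cdot r$ for all $x\in\mathfrak{W}$.
   Context: The Witt algebra $\mathfrak{W}$ is the complex Lie algebra with basis $\{L_m : m\in\mathbb{Z}\}$ (elements are finite linear combinations) and bracket $[L_m,L_n]=(m-n)L_{m+n}$. The exterior square $\bigwedge^2\mathfrak{W}$ (finite sums of elements $a\wedge b = a\otimes b - b\otimes a$) is a $\mathfrak{W}$-module via $x\cdot(a\wedge b)=[x,a]\wedge b + a\wedge[x,b]$, i.e. $x\cdot t=[x\otimes 1+1\otimes x,\,t]$. A 1-cocycle is a linear map $\delta:\mathfrak{W}\to\bigwedge^2\mathfrak{W}$ with $\delta([x,y])=x\cdot\delta(y)-y\cdot\delta(x)$; a 1-coboundary is a map of the form $x\mapsto x\cdot r$ for a fixed $r\in\bigwedge^2\mathfrak{W}$; $H^1$ is the quotient of 1-cocycles by 1-coboundaries. *)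

theory Defs
  imports Complex_Main
begin

text \<open>Elements of the Witt algebra: finitely supported coefficient functions
  \<open>a :: int \<Rightarrow> complex\<close>, representing \<open>\<Sum>m. a m L_m\<close>.\<close>

definition witt :: "(int \<Rightarrow> complex) set" where
  "witt = {a. finite {m. a m \<noteq> 0}}"

definition L :: "int \<Rightarrow> int \<Rightarrow> complex" where
  "L m = (\<lambda>k. if k = m then 1 else 0)"

text \<open>Lie bracket, bilinear extension of \<open>[L_m,L_n] = (m-n) L_(m+n)\<close>.\<close>
definition wbr :: "(int \<Rightarrow> complex) \<Rightarrow> (int \<Rightarrow> complex) \<Rightarrow> (int \<Rightarrow> complex)" where
  "wbr a b = (\<lambda>k. \<Sum>m\<in>{m. a m \<noteq> 0}. of_int (m - (k - m)) * a m * b (k - m))"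

text \<open>Tensor square \<open>W \<otimes> W\<close>: finitely supported functions on \<open>int \<times> int\<close>
  (coefficients with respect to the basis \<open>L_i \<otimes> L_j\<close>).\<close>
definition tens :: "(int \<Rightarrow> complex) \<Rightarrow> (int \<Rightarrow> complex) \<Rightarrow> (int \<times> int \<Rightarrow> complex)" where
  "tens a b = (\<lambda>(i, j). a i * b j)"

definition wedge :: "(int \<Rightarrow> complex) \<Rightarrow> (int \<Rightarrow> complex) \<Rightarrow> (int \<times> int \<Rightarrow> complex)" where
  "wedge a b = (\<lambda>p. tens a b p - tens b a p)"

definition ext2 :: "(int \<times> int \<Rightarrow> complex) set" where
  "ext2 = {t. \<exists>S c. finite S \<and> S \<subseteq> witt \<times> witt \<and>
              t = (\<lambda>p. \<Sum>(a, b)\<in>S. c (a, b) * wedge a b p)}"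

text \<open>Action \<open>x \<cdot> t\<close>, the linear extension of
  \<open>x \<cdot> (L_i \<otimes> L_j) = [x,L_i] \<otimes> L_j + L_i \<otimes> [x,L_j]\<close>.\<close>
definition act :: "(int \<Rightarrow> complex) \<Rightarrow> (int \<times> int \<Rightarrow> complex) \<Rightarrow> (int \<times> int \<Rightarrow> complex)" where
  "act x t = (\<lambda>p. \<Sum>(i, j)\<in>{q. t q \<noteq> 0}.
       t (i, j) * (tens (wbr x (L i)) (L j) p + tens (L i) (wbr x (L j)) p))"

end

theory Submission
  imports Defs
begin

text \<open>On the basis, a cocycle is a family \<open>D\<^sub>m = \<delta>(L\<^sub>m)\<close> of finitely supported
  antisymmetric arrays with \<open>(m - n) D\<^sub>m\<^sub>+\<^sub>n = L\<^sub>m \<cdot> D\<^sub>n - L\<^sub>n \<cdot> D\<^sub>m\<close>. Since \<open>L\<^sub>0\<close> acts on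
  \<open>L\<^sub>p \<otimes> L\<^sub>q\<close> by \<open>-(p + q)\<close>, one coboundary kills \<open>D\<^sub>0\<close>, after which the relation with
  \<open>n = 0\<close> makes every \<open>D\<^sub>m\<close> homogeneous of degree \<open>m\<close>. A second coboundary, supported on
  the antidiagonal and given by a solution of a second-order difference equation, arranges
  that \<open>D\<^sub>2\<close> is determined by \<open>D\<^sub>1\<close>. The relations for \<open>(m, n)\<close> among \<open>\<plusminus>1, \<plusminus>2\<close> then
  force \<open>D\<^sub>1 = 0\<close> by induction upwards from the bottom of the support, hence \<open>D\<^sub>2 = 0\<close>, and
  since \<open>L\<^sub>1, L\<^sub>2\<close> generate the positive part and finite supports are eventually
  annihilated, all \<open>D\<^sub>m\<close> vanish. Antisymmetrising the accumulated \<open>r\<close> puts it in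
  \<open>\<And>\<^sup>2 W\<close>, and linearity extends \<open>\<delta> = (\<cdot> r)\<close> from the basis to all of \<open>W\<close>.\<close>

abbreviation fin_supp :: "('a \<Rightarrow> 'b::zero) \<Rightarrow> bool" where
  "fin_supp f \<equiv> finite {x. f x \<noteq> 0}"

lemma fin_supp_add:
  fixes a b :: "'a \<Rightarrow> 'b::monoid_add"
  shows "fin_supp a \<Longrightarrow> fin_supp b \<Longrightarrow> fin_supp (\<lambda>x. a x + b x)"
  by (rule finite_subset[of _ "{x. a x \<noteq> 0} \<union> {x. b x \<noteq> 0}"]) auto

lemma fin_supp_diff:
  fixes a b :: "'a \<Rightarrow> 'b::group_add"
  shows "fin_supp a \<Longrightarrow> fin_supp b \<Longrightarrow> fin_supp (\<lambda>x. a x - b x)"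
  by (rule finite_subset[of _ "{x. a x \<noteq> 0} \<union> {x. b x \<noteq> 0}"]) auto

lemma finite_abs_fst_bounded:
  assumes "finite (S :: (int \<times> int) set)"
  shows "\<exists>K\<ge>0. \<forall>(p, q)\<in>S. \<bar>p\<bar> \<le> K"
proof -
  define K where "K = Max (insert 0 ((\<lambda>z. \<bar>fst z\<bar>) ` S))"
  have "\<forall>z\<in>S. \<bar>fst z\<bar> \<le> K" "K \<ge> 0"
    unfolding K_def using assms by (auto intro: Max_ge)
  then show ?thesis by fastforce
qed

section \<open>Cocycles on the basis\<close>

text \<open>The action of \<open>L\<^sub>m\<close> on coefficient arrays \<open>t\<close> of \<open>W \<otimes> W\<close>, read off from
  \<open>L\<^sub>m \<cdot> (L\<^sub>i \<otimes> L\<^sub>j) = (m - i) L\<^sub>m\<^sub>+\<^sub>i \<otimes> L\<^sub>j + (m - j) L\<^sub>i \<otimes> L\<^sub>m\<^sub>+\<^sub>j\<close>.\<close>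
definition Lact :: "int \<Rightarrow> (int \<times> int \<Rightarrow> complex) \<Rightarrow> (int \<times> int \<Rightarrow> complex)" where
  "Lact m t = (\<lambda>(p, q). of_int (2*m - p) * t (p - m, q) + of_int (2*m - q) * t (p, q - m))"

lemma Lact_apply: "Lact m t (p, q) = of_int (2*m - p) * t (p - m, q) + of_int (2*m - q) * t (p, q - m)"
  by (simp add: Lact_def)

lemma Lact_add: "Lact m (\<lambda>z. a z + b z) z = Lact m a z + Lact m b z"
  by (cases z) (simp add: Lact_apply algebra_simps)

lemma Lact_diff: "Lact m (\<lambda>z. a z - b z) z = Lact m a z - Lact m b z"
  by (cases z) (simp add: Lact_apply algebra_simps)

lemma Lact_zero [simp]: "Lact m (\<lambda>z. 0) = (\<lambda>z. 0)"
  by (rule ext) (simp add: Lact_def split: prod.split)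

lemma Lact_commutator:
  "Lact m (Lact n t) z - Lact n (Lact m t) z = of_int (m - n) * Lact (m + n) t z"
proof (cases z)
  case (Pair p q)
  have "p - n - m = p - (m + n)" "p - m - n = p - (m + n)"
    "q - n - m = q - (m + n)" "q - m - n = q - (m + n)"
    by simp_all
  then show ?thesis unfolding Pair Lact_apply by (simp add: algebra_simps)
qed

lemma fin_supp_Lact:
  assumes "fin_supp t"
  shows "fin_supp (Lact m t)"
proof (rule finite_subset)
  let ?S = "{z. t z \<noteq> 0}"
  show "{z. Lact m t z \<noteq> 0} \<subseteq> (\<lambda>(a, b). (a + m, b)) ` ?S \<union> (\<lambda>(a, b). (a, b + m)) ` ?S"
  proof
    fix z assume "z \<in> {z. Lact m t z \<noteq> 0}"
    moreover obtain p q where z: "z = (p, q)" by (cases z)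
    ultimately have "(p - m, q) \<in> ?S \<or> (p, q - m) \<in> ?S" by (auto simp: Lact_apply)
    then show "z \<in> (\<lambda>(a, b). (a + m, b)) ` ?S \<union> (\<lambda>(a, b). (a, b + m)) ` ?S"
      by (auto simp: z image_iff intro: bexI[of _ "(p - m, q)"] bexI[of _ "(p, q - m)"])
  qed
  show "finite ((\<lambda>(a, b). (a + m, b)) ` ?S \<union> (\<lambda>(a, b). (a, b + m)) ` ?S)"
    using assms by simp
qed

text \<open>For \<open>m\<close> far beyond the support, \<open>Lact m t (p, q + m)\<close> only sees \<open>(m - q) t (p, q)\<close>.\<close>
lemma Lact_eventually_zero_imp_zero:
  assumes fin: "fin_supp t" and zero: "\<And>m. m \<ge> m\<^sub>0 \<Longrightarrow> Lact m t = (\<lambda>z. 0)"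
  shows "t = (\<lambda>z. 0)"
proof
  fix z :: "int \<times> int"
  obtain p q where z: "z = (p, q)" by (cases z)
  obtain K where "K \<ge> 0" and K: "\<And>a b. t (a, b) \<noteq> 0 \<Longrightarrow> \<bar>a\<bar> \<le> K"
    using finite_abs_fst_bounded[OF fin] by auto
  define m where "m = max m\<^sub>0 (K + \<bar>p\<bar> + \<bar>q\<bar> + 1)"
  have "Lact m t (p, q + m) = 0" using zero by (simp add: m_def)
  moreover have "t (p - m, q + m) = 0" using K[of "p - m" "q + m"] \<open>K \<ge> 0\<close> by (force simp: m_def)
  moreover have "m - q \<noteq> 0" using \<open>K \<ge> 0\<close> by (simp add: m_def)
  ultimately show "t z = 0" by (simp add: z Lact_apply algebra_simps)
qed

definition Lcocycle :: "(int \<Rightarrow> int \<times> int \<Rightarrow> complex) \<Rightarrow> bool" where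
  "Lcocycle D \<longleftrightarrow> (\<forall>m n z. of_int (m - n) * D (m + n) z = Lact m (D n) z - Lact n (D m) z)"

lemma LcocycleD: "Lcocycle D \<Longrightarrow> of_int (m - n) * D (m + n) z = Lact m (D n) z - Lact n (D m) z"
  unfolding Lcocycle_def by blast

lemma Lcocycle_diff_coboundary:
  assumes "Lcocycle D"
  shows "Lcocycle (\<lambda>m z. D m z - Lact m r z)"
  unfolding Lcocycle_def Lact_diff
proof (intro allI)
  fix m n z
  show "of_int (m - n) * (D (m + n) z - Lact (m + n) r z) =
      Lact m (D n) z - Lact m (Lact n r) z - (Lact n (D m) z - Lact n (Lact m r) z)"
    using LcocycleD[OF assms, of m n z] Lact_commutator[of m n r z] by (simp add: algebra_simps)
qed

text \<open>\<open>L\<^sub>1\<close> and \<open>L\<^sub>2\<close> generate all \<open>L\<^sub>n\<close> with \<open>n \<ge> 1\<close>; a negative \<open>X\<^sub>n\<close> is then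
  annihilated by all \<open>L\<^sub>m\<close> with \<open>m \<ge> 1 - n\<close>.\<close>
lemma Lcocycle_zero_if_zero_at_1_2:
  assumes cc: "Lcocycle X" and fin: "\<And>n. fin_supp (X n)"
    and X1: "X 1 = (\<lambda>z. 0)" and X2: "X 2 = (\<lambda>z. 0)"
  shows "X n = (\<lambda>z. 0)"
proof -
  have pos: "X (int k + 1) = (\<lambda>z. 0) \<and> X (int k + 2) = (\<lambda>z. 0)" for k :: nat
  proof (induction k)
    case 0
    then show ?case using X1 X2 by simp
  next
    case (Suc k)
    have "of_int (1 - (int k + 2)) * X (1 + (int k + 2)) z = 0" for z
      using LcocycleD[OF cc, of 1 "int k + 2" z] Suc.IH X1 by simp
    moreover have "of_int (1 - (int k + 2)) \<noteq> (0::complex)"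
      by (simp only: of_int_eq_0_iff)
    ultimately have "X (int k + 3) = (\<lambda>z. 0)" by (auto simp: add.commute)
    then show ?case using Suc.IH by (simp add: add.commute)
  qed
  have pos': "X n = (\<lambda>z. 0)" if "n \<ge> 1" for n
    using pos[of "nat (n - 1)"] that by (simp add: add.commute)
  show ?thesis
  proof (cases "n \<ge> 1")
    case False
    show ?thesis
    proof (rule Lact_eventually_zero_imp_zero[OF fin])
      fix m assume "m \<ge> 1 - n"
      then show "Lact m (X n) = (\<lambda>z. 0)"
        using LcocycleD[OF cc, of m n] pos'[of m] pos'[of "m + n"] False by auto
    qed
  qed (rule pos')
qed

section \<open>Normal form of a basis cocycle\<close>

definition homogeneous :: "(int \<Rightarrow> int \<times> int \<Rightarrow> complex) \<Rightarrow> bool" where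
  "homogeneous X \<longleftrightarrow> (\<forall>m p q. p + q \<noteq> m \<longrightarrow> X m (p, q) = 0)"

lemma Lcocycle_degree_zero:
  assumes "Lcocycle X"
  shows "of_int (m - p - q) * X m (p, q) = Lact m (X 0) (p, q)"
  using LcocycleD[OF assms, of m 0 "(p, q)"] by (simp add: Lact_apply algebra_simps)

text \<open>The first coboundary makes \<open>D\<^sub>0\<close> vanish off the antidiagonal, and then the
  relation with \<open>L\<^sub>0\<close> forces homogeneity and kills the rest of \<open>D\<^sub>0\<close>.\<close>
lemma Lcocycle_cohomologous_homogeneous:
  assumes fin: "\<And>m. fin_supp (D m)" and cc: "Lcocycle D"
  shows "\<exists>r. fin_supp r \<and> homogeneous (\<lambda>m z. D m z - Lact m r z) \<and> (\<forall>z. D 0 z = Lact 0 r z)"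
proof -
  define r where "r = (\<lambda>(p, q). if p + q = 0 then 0 else - D 0 (p, q) / of_int (p + q))"
  define X where "X = (\<lambda>m z. D m z - Lact m r z)"
  have fin_r: "fin_supp r"
    by (rule finite_subset[OF _ fin[of 0]]) (auto simp: r_def split: if_splits)
  have fin_X: "fin_supp (X m)" for m
    unfolding X_def by (intro fin_supp_diff fin fin_supp_Lact fin_r)
  have cc_X: "Lcocycle X" unfolding X_def by (rule Lcocycle_diff_coboundary[OF cc])
  have X0: "X 0 (p, q) = (if p + q = 0 then D 0 (p, q) else 0)" for p q
  proof -
    have "Lact 0 r (p, q) = - of_int (p + q) * r (p, q)" by (simp add: Lact_apply algebra_simps)
    moreover have "of_int (p + q) \<noteq> (0::complex)" if "p + q \<noteq> 0"
      using that by (simp del: of_int_add)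
    ultimately show ?thesis by (simp add: X_def r_def del: of_int_add)
  qed
  have X0_shift: "Lact m (X 0) (p, q) = 0" if "p + q \<noteq> m" for m p q
    using that by (simp add: Lact_apply X0)
  have hom: "homogeneous X"
    unfolding homogeneous_def
  proof (intro allI impI)
    fix m p q :: int assume "p + q \<noteq> m"
    then have "of_int (m - p - q) \<noteq> (0::complex)" by (simp only: of_int_eq_0_iff)
    then show "X m (p, q) = 0"
      using Lcocycle_degree_zero[OF cc_X, of m p q] X0_shift \<open>p + q \<noteq> m\<close> by simp
  qed
  have "Lact m (X 0) = (\<lambda>z. 0)" for m
  proof
    fix z :: "int \<times> int"
    obtain p q where z: "z = (p, q)" by (cases z)
    show "Lact m (X 0) z = 0"
      using Lcocycle_degree_zero[OF cc_X, of m p q] X0_shift[of p q m] by (cases "p + q = m") (auto simp: z)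
  qed
  then have "X 0 = (\<lambda>z. 0)" by (intro Lact_eventually_zero_imp_zero[OF fin_X]) auto
  then have "\<forall>z. D 0 z = Lact 0 r z" by (simp add: X_def fun_eq_iff)
  with fin_r hom show ?thesis unfolding X_def by blast
qed

definition graded_cocycle :: "(int \<Rightarrow> int \<Rightarrow> complex) \<Rightarrow> bool" where
  "graded_cocycle e \<longleftrightarrow> (\<forall>m n p. of_int (m - n) * e (m + n) p =
     of_int (2*m - p) * e n (p - m) + of_int (m - n + p) * e n p
   - of_int (2*n - p) * e m (p - n) - of_int (n - m + p) * e m p)"

lemma graded_cocycle_of_homogeneous:
  assumes cc: "Lcocycle X" and hom: "homogeneous X"
  shows "graded_cocycle (\<lambda>m p. X m (p, m - p))"
  unfolding graded_cocycle_def
proof (intro allI)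
  fix m n p :: int
  show "of_int (m - n) * X (m + n) (p, m + n - p) =
     of_int (2*m - p) * X n (p - m, n - (p - m)) + of_int (m - n + p) * X n (p, n - p)
   - of_int (2*n - p) * X m (p - n, m - (p - n)) - of_int (n - m + p) * X m (p, m - p)"
    using LcocycleD[OF cc, of m n "(p, m + n - p)"] by (simp add: Lact_apply algebra_simps)
qed

text \<open>Once all values below \<open>p\<close> vanish, the relations for
  \<open>(m, n) = (1,-1), (2,-1), (1,-2), (2,-2)\<close> give, for each next unknown in turn, two linear
  equations whose coefficients differ by exactly \<open>1\<close>; their difference isolates it.\<close>
lemma graded_cocycle_vanishing_step:
  assumes cc: "graded_cocycle e" and e0: "\<And>p. e 0 p = 0" and e2: "\<And>p. e 2 p = e 1 p + e 1 (p - 1)"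
    and below: "\<And>q. q < p \<Longrightarrow> e 1 q = 0 \<and> e (-1) q = 0 \<and> e (-2) q = 0"
  shows "e 1 p = 0 \<and> e (-1) p = 0 \<and> e (-2) p = 0"
proof -
  have rel: "of_int (m - n) * e (m + n) p =
     of_int (2*m - p) * e n (p - m) + of_int (m - n + p) * e n p
   - of_int (2*n - p) * e m (p - n) - of_int (n - m + p) * e m p" for m n p
    using cc unfolding graded_cocycle_def by blast
  have R1: "of_int (2 - p) * e (-1) (p - 1) + of_int (2 + p) * e (-1) p + of_int (2 + p) * e 1 (p + 1)
      - of_int (p - 2) * e 1 p = 0" for p
    using rel[of 1 "-1" p] e0[of p] by (simp add: algebra_simps)
  have R2: "3 * e 1 p = of_int (4 - p) * e (-1) (p - 2) + of_int (3 + p) * e (-1) p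
      + of_int (2 + p) * (e 1 (p + 1) + e 1 p) - of_int (p - 3) * (e 1 p + e 1 (p - 1))" for p
    using rel[of 2 "-1" p] e2[of "p + 1"] e2[of p] by (simp add: algebra_simps)
  have R3: "3 * e (-1) p = of_int (2 - p) * e (-2) (p - 1) + of_int (3 + p) * e (-2) p
      + of_int (4 + p) * e 1 (p + 2) - of_int (p - 3) * e 1 p" for p
    using rel[of 1 "-2" p] by (simp add: algebra_simps)
  have R4: "of_int (4 - p) * e (-2) (p - 2) + of_int (4 + p) * e (-2) p
      + of_int (4 + p) * (e 1 (p + 2) + e 1 (p + 1)) - of_int (p - 4) * (e 1 p + e 1 (p - 1)) = 0" for p
    using rel[of 2 "-2" p] e2[of "p + 2"] e2[of p] e0[of p] by (simp add: algebra_simps)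
  have z: "e 1 (p - 1) = 0" "e 1 (p - 2) = 0" "e (-1) (p - 1) = 0" "e (-1) (p - 2) = 0"
    "e (-2) (p - 1) = 0" "e (-2) (p - 2) = 0" "e (-2) (p - 3) = 0"
    using below by auto
  have A: "(of_int p + 1) * e 1 p = 0" and B: "(of_int p + 2) * e 1 p = 0"
    using R1[of "p - 1"] R3[of "p - 2"] z by (simp_all add: algebra_simps)
  have "e 1 p = (of_int p + 2) * e 1 p - (of_int p + 1) * e 1 p"
    by (simp add: algebra_simps)
  also have "\<dots> = 0" unfolding A B by simp
  finally have u: "e 1 p = 0" .
  have C1: "(of_int p + 2) * e (-1) p + (of_int p + 2) * e 1 (p + 1) = 0"
    and C2: "(of_int p + 3) * e (-1) p + (of_int p + 2) * e 1 (p + 1) = 0"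
    using R1[of p] R2[of p] z u by (simp_all add: algebra_simps)
  moreover have "e (-1) p = ((of_int p + 3) * e (-1) p + (of_int p + 2) * e 1 (p + 1))
      - ((of_int p + 2) * e (-1) p + (of_int p + 2) * e 1 (p + 1))"
    by (simp add: algebra_simps)
  ultimately have v: "e (-1) p = 0" by simp
  have A': "(of_int p + 2) * e 1 (p + 1) = 0" using C1 v by simp
  have B': "(of_int p + 3) * e 1 (p + 1) = 0" using R3[of "p - 1"] z u by (simp add: algebra_simps)
  have "e 1 (p + 1) = (of_int p + 3) * e 1 (p + 1) - (of_int p + 2) * e 1 (p + 1)"
    by (simp add: algebra_simps)
  also have "\<dots> = 0" unfolding A' B' by simp
  finally have u1: "e 1 (p + 1) = 0" .
  have "(of_int p + 3) * e (-2) p + (of_int p + 4) * e 1 (p + 2) = 0"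
    "(of_int p + 4) * e (-2) p + (of_int p + 4) * e 1 (p + 2) = 0"
    using R3[of p] R4[of p] z u v u1 by (simp_all add: algebra_simps)
  moreover have "e (-2) p = ((of_int p + 4) * e (-2) p + (of_int p + 4) * e 1 (p + 2))
      - ((of_int p + 3) * e (-2) p + (of_int p + 4) * e 1 (p + 2))"
    by (simp add: algebra_simps)
  ultimately have "e (-2) p = 0" by simp
  with u v show ?thesis by blast
qed

lemma graded_cocycle_vanishes_at_1:
  assumes cc: "graded_cocycle e" and e0: "\<And>p. e 0 p = 0" and e2: "\<And>p. e 2 p = e 1 p + e 1 (p - 1)"
    and low: "\<And>q. q < P \<Longrightarrow> e 1 q = 0 \<and> e (-1) q = 0 \<and> e (-2) q = 0"
  shows "e 1 q = 0"
proof -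
  have "\<forall>q < P + int k. e 1 q = 0 \<and> e (-1) q = 0 \<and> e (-2) q = 0" for k :: nat
  proof (induction k)
    case 0
    then show ?case using low by simp
  next
    case (Suc k)
    have "e 1 (P + int k) = 0 \<and> e (-1) (P + int k) = 0 \<and> e (-2) (P + int k) = 0"
      by (rule graded_cocycle_vanishing_step[OF cc e0 e2]) (use Suc.IH in blast)
    moreover have "q < P + int k \<or> q = P + int k" if "q < P + int (Suc k)" for q
      using that by auto
    ultimately show ?case using Suc.IH by blast
  qed
  from this[of "nat (q - P + 1)"] show ?thesis by simp
qed

lemma second_difference_solvable:
  fixes g :: "int \<Rightarrow> 'a::ring_1"
  assumes "\<And>k. k < a \<Longrightarrow> g k = 0"
  shows "\<exists>c. (\<forall>k<a. c k = 0) \<and> (\<forall>p. c p - 2 * c (p - 1) + c (p - 2) = g p)"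
proof -
  have sum_step: "(\<Sum>k\<in>{a..p}. h k) = (\<Sum>k\<in>{a..p - 1}. h k) + h p"
    if "\<And>k. k < a \<Longrightarrow> h k = 0" for h :: "int \<Rightarrow> 'a" and p
  proof (cases "p < a")
    case False
    then have "{a..p} = insert p {a..p - 1}" by auto
    then show ?thesis by simp
  qed (simp add: that)
  define S where "S j = (\<Sum>k\<in>{a..j}. g k)" for j
  define c where "c p = (\<Sum>j\<in>{a..p}. S j)" for p
  have S_step: "S p = S (p - 1) + g p" for p unfolding S_def by (rule sum_step) (rule assms)
  have c_step: "c p = c (p - 1) + S p" for p unfolding c_def by (rule sum_step) (simp add: S_def)
  have c_diff: "c p - c (p - 1) = S p" for p by (simp add: c_step[of p])
  have "c p - 2 * c (p - 1) + c (p - 2) = g p" for p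
  proof -
    have "c p - 2 * c (p - 1) + c (p - 2) = (c p - c (p - 1)) - (c (p - 1) - c (p - 1 - 1))"
      by (simp add: algebra_simps mult_2)
    also have "\<dots> = g p" unfolding c_diff by (simp add: S_step[of p])
    finally show ?thesis .
  qed
  moreover have "\<forall>k<a. c k = 0" by (simp add: c_def)
  ultimately show ?thesis by blast
qed

text \<open>Eliminating \<open>c\<^sub>p\<close> and \<open>c\<^sub>p\<^sub>-\<^sub>1\<close> from the three relations at \<open>p = q + 2\<close> leaves
  \<open>12 c\<^sub>q = 0\<close>.\<close>
lemma linear_and_hypergeometric_vanishes:
  fixes c :: "int \<Rightarrow> complex"
  assumes hyp: "\<And>t. t > K \<Longrightarrow> of_int (2 - t) * c (t - 1) + of_int (1 + t) * c t = 0"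
    and lin: "\<And>t. t > K + 1 \<Longrightarrow> c t - 2 * c (t - 1) + c (t - 2) = 0"
    and "q > K"
  shows "c q = 0"
proof -
  define p where "p = q + 2"
  have "12 * c (p - 2) = of_int p * of_int (p + 1) * (c p - 2 * c (p - 1) + c (p - 2))
      - of_int p * (of_int (2 - p) * c (p - 1) + of_int (1 + p) * c p)
      + of_int (p + 4) * (of_int (2 - (p - 1)) * c (p - 1 - 1) + of_int (1 + (p - 1)) * c (p - 1))"
    by (simp add: algebra_simps)
  also have "\<dots> = 0" using hyp[of p] hyp[of "p - 1"] lin[of p] \<open>q > K\<close> by (simp add: p_def)
  finally show ?thesis by (simp add: p_def)
qed

definition antidiag :: "(int \<Rightarrow> complex) \<Rightarrow> int \<times> int \<Rightarrow> complex" where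
  "antidiag c = (\<lambda>(p, q). if p + q = 0 then c p else 0)"

lemma Lact_antidiag:
  "Lact m (antidiag c) (p, q) =
     (if p + q = m then of_int (2*m - p) * c (p - m) + of_int (m + p) * c p else 0)"
  by (cases "p + q = m") (auto simp: Lact_apply antidiag_def algebra_simps)

lemma fin_supp_antidiag:
  assumes "\<And>p. \<bar>p\<bar> > K \<Longrightarrow> c p = 0"
  shows "fin_supp (antidiag c)"
proof (rule finite_subset)
  show "{z. antidiag c z \<noteq> 0} \<subseteq> (\<lambda>p. (p, -p)) ` {-K..K}"
  proof
    fix z assume "z \<in> {z. antidiag c z \<noteq> 0}"
    moreover obtain p q where z: "z = (p, q)" by (cases z)
    ultimately have "q = -p" "c p \<noteq> 0" by (auto simp: antidiag_def split: if_splits)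
    moreover have "p \<in> {-K..K}" using assms[of p] \<open>c p \<noteq> 0\<close> by (cases "K < \<bar>p\<bar>") auto
    ultimately show "z \<in> (\<lambda>p. (p, -p)) ` {-K..K}" by (auto simp: z)
  qed
qed simp

lemma homogeneous_Lcocycle_zero_if_zero_at_1_2:
  assumes cc: "Lcocycle X" and hom: "homogeneous X" and fin: "\<And>m. fin_supp (X m)"
    and X1: "\<And>p. X 1 (p, 1 - p) = 0" and X2: "\<And>p. X 2 (p, 2 - p) = 0"
  shows "X m = (\<lambda>z. 0)"
proof (rule Lcocycle_zero_if_zero_at_1_2[OF cc fin])
  have "X n (p, q) = 0" if "n \<in> {1, 2}" for n p q
  proof (cases "p + q = n")
    case True
    then have "q = n - p" by simp
    with that X1 X2 show ?thesis by auto
  qed (use hom in \<open>simp add: homogeneous_def\<close>)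
  then show "X 1 = (\<lambda>z. 0)" "X 2 = (\<lambda>z. 0)" by (auto simp: fun_eq_iff)
qed

text \<open>With \<open>e\<^sub>m p\<close> the coefficient of \<open>L\<^sub>p \<otimes> L\<^sub>m\<^sub>-\<^sub>p\<close>, subtracting the coboundary of
  \<open>antidiag c\<close> changes \<open>e\<^sub>2 p - e\<^sub>1 p - e\<^sub>1 (p - 1)\<close> by the second difference of \<open>c\<close>, so
  \<open>c\<close> can be chosen to make it vanish. Finiteness of the support of \<open>c\<close> is only
  available at the end: it follows from \<open>e\<^sub>1 = 0\<close>.\<close>
lemma homogeneous_Lcocycle_coboundary:
  assumes fin: "\<And>m. fin_supp (D m)" and cc: "Lcocycle D" and hom: "homogeneous D"
    and D0: "D 0 = (\<lambda>z. 0)"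
  shows "\<exists>r. fin_supp r \<and> (\<forall>m. D m = Lact m r)"
proof -
  have "finite (\<Union>m\<in>{1, 2, -1, -2}. {z. D m z \<noteq> 0})" using fin by simp
  then obtain K where "K \<ge> 0" and K: "\<And>m p q. m \<in> {1, 2, -1, -2} \<Longrightarrow> D m (p, q) \<noteq> 0 \<Longrightarrow> \<bar>p\<bar> \<le> K"
    by (blast dest: finite_abs_fst_bounded)
  define F where "F m p = D m (p, m - p)" for m p
  have F_out: "F m p = 0" if "m \<in> {1, 2, -1, -2}" "\<bar>p\<bar> > K" for m p
    using K[of m p "m - p"] that by (force simp: F_def)
  define g where "g p = F 2 p - F 1 p - F 1 (p - 1)" for p
  have "g k = 0" if "k < -K" for k using F_out that \<open>K \<ge> 0\<close> by (simp add: g_def)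
  then obtain c where c_low: "\<And>k. k < -K \<Longrightarrow> c k = 0"
    and c_rec: "\<And>p. c p - 2 * c (p - 1) + c (p - 2) = g p"
    using second_difference_solvable[of "-K" g] by blast
  define X where "X m z = D m z - Lact m (antidiag c) z" for m z
  define e where "e m p = X m (p, m - p)" for m p
  have e_eq: "e m p = F m p - (of_int (2*m - p) * c (p - m) + of_int (m + p) * c p)" for m p
    by (simp add: e_def X_def F_def Lact_antidiag)
  have hom_X: "homogeneous X" using hom by (simp add: homogeneous_def X_def Lact_antidiag)
  have cc_X: "Lcocycle X" unfolding X_def by (rule Lcocycle_diff_coboundary[OF cc])
  have e0: "e 0 p = 0" for p by (simp add: e_eq F_def D0 algebra_simps)
  have e2: "e 2 p = e 1 p + e 1 (p - 1)" for p
  proof -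
    have "F 2 p = F 1 p + F 1 (p - 1) + (c p - 2 * c (p - 1) + c (p - 2))"
      unfolding c_rec g_def by simp
    then show ?thesis by (simp add: e_eq algebra_simps)
  qed
  have "e 1 q = 0 \<and> e (-1) q = 0 \<and> e (-2) q = 0" if "q < -K - 2" for q
    using F_out[of _ q] c_low[of q] c_low[of "q - 1"] c_low[of "q + 1"] c_low[of "q + 2"] that
    by (simp add: e_eq)
  with graded_cocycle_of_homogeneous[OF cc_X hom_X] e0 e2
  have e1: "e 1 q = 0" for q unfolding e_def[symmetric] by (rule graded_cocycle_vanishes_at_1)
  have c_high: "c q = 0" if "q > K" for q
  proof (rule linear_and_hypergeometric_vanishes[OF _ _ that])
    show "of_int (2 - t) * c (t - 1) + of_int (1 + t) * c t = 0" if "t > K" for t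
      using e1[of t] F_out[of 1 t] that \<open>K \<ge> 0\<close> by (simp add: e_eq algebra_simps)
    show "c t - 2 * c (t - 1) + c (t - 2) = 0" if "t > K + 1" for t
      using F_out[of _ t] F_out[of _ "t - 1"] that \<open>K \<ge> 0\<close> by (simp add: c_rec g_def)
  qed
  have "c p = 0" if "\<bar>p\<bar> > K" for p
  proof (cases "p > K")
    case False
    with that have "p < -K" by linarith
    then show ?thesis by (rule c_low)
  qed (rule c_high)
  then have fin_r: "fin_supp (antidiag c)" by (rule fin_supp_antidiag)
  have fin_X: "fin_supp (X m)" for m
    unfolding X_def by (intro fin_supp_diff fin fin_supp_Lact fin_r)
  have X1: "X 1 (p, 1 - p) = 0" and X2: "X 2 (p, 2 - p) = 0" for p
    using e1[of p] e1[of "p - 1"] e2[of p] unfolding e_def by simp_all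
  have "X m z = 0" for m z
    using fun_cong[where x = z, OF homogeneous_Lcocycle_zero_if_zero_at_1_2[OF cc_X hom_X fin_X X1 X2]]
    by simp
  then have "D m = Lact m (antidiag c)" for m by (simp add: fun_eq_iff X_def)
  with fin_r show ?thesis by blast
qed

lemma Lcocycle_coboundary:
  assumes fin: "\<And>m. fin_supp (D m)" and cc: "Lcocycle D"
  shows "\<exists>r. fin_supp r \<and> (\<forall>m. D m = Lact m r)"
proof -
  obtain r\<^sub>1 where fin_r\<^sub>1: "fin_supp r\<^sub>1" and hom: "homogeneous (\<lambda>m z. D m z - Lact m r\<^sub>1 z)"
    and D0: "\<forall>z. D 0 z = Lact 0 r\<^sub>1 z"
    using Lcocycle_cohomologous_homogeneous[OF fin cc] by blast
  have "fin_supp (\<lambda>z. D m z - Lact m r\<^sub>1 z)" for m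
    by (intro fin_supp_diff fin fin_supp_Lact fin_r\<^sub>1)
  moreover have "(\<lambda>z. D 0 z - Lact 0 r\<^sub>1 z) = (\<lambda>z. 0)" using D0 by (simp add: fun_eq_iff)
  ultimately obtain r\<^sub>2 where fin_r\<^sub>2: "fin_supp r\<^sub>2"
    and r\<^sub>2: "\<And>m. (\<lambda>z. D m z - Lact m r\<^sub>1 z) = Lact m r\<^sub>2"
    using homogeneous_Lcocycle_coboundary[OF _ Lcocycle_diff_coboundary[OF cc] hom] by blast
  have "D m = Lact m (\<lambda>z. r\<^sub>1 z + r\<^sub>2 z)" for m
    using r\<^sub>2[of m] by (simp add: fun_eq_iff Lact_add algebra_simps)
  with fin_supp_add[OF fin_r\<^sub>1 fin_r\<^sub>2] show ?thesis
    by (intro exI[of _ "\<lambda>z. r\<^sub>1 z + r\<^sub>2 z"]) blast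
qed

lemma Lcocycle_coboundary_antisym:
  assumes fin: "\<And>m. fin_supp (D m)" and cc: "Lcocycle D"
    and anti: "\<And>m p q. D m (q, p) = - D m (p, q)"
  shows "\<exists>r. fin_supp r \<and> (\<forall>p q. r (q, p) = - r (p, q)) \<and> (\<forall>m. D m = Lact m r)"
proof -
  obtain r where fin_r: "fin_supp r" and D: "\<And>m. D m = Lact m r"
    using Lcocycle_coboundary[OF fin cc] by blast
  define r' where "r' = (\<lambda>(p, q). (r (p, q) - r (q, p)) / 2)"
  have "{z. r' z \<noteq> 0} \<subseteq> {z. r z \<noteq> 0} \<union> prod.swap ` {z. r z \<noteq> 0}"
    by (force simp: r'_def image_iff)
  then have "fin_supp r'" by (rule finite_subset) (use fin_r in simp)
  moreover have "r' (q, p) = - r' (p, q)" for p q by (simp add: r'_def field_simps)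
  moreover have "D m (p, q) = Lact m r' (p, q)" for m p q
  proof -
    have "Lact m r' (p, q) = (Lact m r (p, q) - Lact m r (q, p)) / 2"
      by (simp add: Lact_apply r'_def field_simps)
    also have "\<dots> = D m (p, q)" using anti[of m q p] by (simp add: D[symmetric])
    finally show ?thesis by simp
  qed
  ultimately show ?thesis by (auto simp: fun_eq_iff)
qed

section \<open>Transfer to the Witt algebra\<close>

lemma supp_L: "{k. L m k \<noteq> 0} = {m}"
  by (auto simp: L_def)

lemma L_in_witt: "L m \<in> witt"
  by (simp add: witt_def supp_L)

lemma inj_L: "inj L"
  by (rule injI) (metis L_def zero_neq_one)

lemma wbr_L: "wbr (L m) b = (\<lambda>k. of_int (2*m - k) * b (k - m))"
  by (rule ext) (simp add: wbr_def supp_L L_def algebra_simps)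

lemma wbr_L_L: "wbr (L m) (L n) = (\<lambda>k. of_int (m - n) * L (m + n) k)"
  unfolding wbr_L by (rule ext) (auto simp: L_def)

lemma sum_mult_indicator:
  fixes t :: "'a \<Rightarrow> 'b::semiring_1"
  assumes "fin_supp t"
  shows "(\<Sum>z\<in>{z. t z \<noteq> 0}. t z * (if z = a then 1 else 0)) = t a"
  using assms by (simp add: if_distrib sum.delta cong: if_cong)

lemma act_L:
  assumes fin: "fin_supp t"
  shows "act (L m) t = Lact m t"
proof
  fix z :: "int \<times> int"
  obtain p q where z: "z = (p, q)" by (cases z)
  have "(case w of (i, j) \<Rightarrow> t (i, j) * (tens (wbr (L m) (L i)) (L j) (p, q) + tens (L i) (wbr (L m) (L j)) (p, q)))
     = of_int (2*m - p) * (t w * (if w = (p - m, q) then 1 else 0))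
       + of_int (2*m - q) * (t w * (if w = (p, q - m) then 1 else 0))" for w
    unfolding wbr_L by (cases w) (auto simp: tens_def L_def algebra_simps)
  then have "act (L m) t (p, q) = (\<Sum>w\<in>{w. t w \<noteq> 0}. of_int (2*m - p) * (t w * (if w = (p - m, q) then 1 else 0))
      + of_int (2*m - q) * (t w * (if w = (p, q - m) then 1 else 0)))"
    unfolding act_def by simp
  also have "\<dots> = Lact m t (p, q)"
    by (simp add: sum.distrib sum_distrib_left[symmetric] sum_mult_indicator[OF fin] Lact_apply)
  finally show "act (L m) t z = Lact m t z" by (simp add: z)
qed

lemma witt_eq_sum_L:
  assumes "x \<in> witt"
  shows "x = (\<lambda>k. \<Sum>m\<in>{m. x m \<noteq> 0}. x m * L m k)"
  using assms by (auto simp: fun_eq_iff witt_def L_def if_distrib sum.delta cong: if_cong)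

lemma sum_L_in_witt:
  assumes "finite A"
  shows "(\<lambda>k. \<Sum>m\<in>A. a m * L m k) \<in> witt"
proof -
  have "{k. (\<Sum>m\<in>A. a m * L m k) \<noteq> 0} \<subseteq> A"
    by (auto simp: L_def if_distrib sum.delta' assms cong: if_cong split: if_splits)
  then show ?thesis unfolding witt_def using assms by (auto intro: finite_subset)
qed

lemma wbr_linear: "wbr x b k = (\<Sum>m\<in>{m. x m \<noteq> 0}. x m * wbr (L m) b k)"
  unfolding wbr_def[of x] by (rule sum.cong) (simp_all add: wbr_L algebra_simps)

lemma act_linear:
  assumes "x \<in> witt"
  shows "act x t z = (\<Sum>m\<in>{m. x m \<noteq> 0}. x m * act (L m) t z)"
proof -
  obtain p q where z: "z = (p, q)" by (cases z)
  have "act x t (p, q) = (\<Sum>w\<in>{w. t w \<noteq> 0}. \<Sum>m\<in>{m. x m \<noteq> 0}. x m *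
        (case w of (i, j) \<Rightarrow> t (i, j) * (tens (wbr (L m) (L i)) (L j) (p, q) + tens (L i) (wbr (L m) (L j)) (p, q))))"
    unfolding act_def
    by (rule sum.cong) (auto simp: tens_def wbr_linear[of x] sum_distrib_left sum_distrib_right sum.distrib algebra_simps)
  also have "\<dots> = (\<Sum>m\<in>{m. x m \<noteq> 0}. x m * act (L m) t (p, q))"
    unfolding act_def by (subst sum.swap) (simp add: sum_distrib_left)
  finally show ?thesis by (simp add: z)
qed

lemma fin_supp_ext2:
  assumes "t \<in> ext2"
  shows "fin_supp t"
proof -
  from assms obtain S c where fin_S: "finite S" and S: "S \<subseteq> witt \<times> witt"
    and t: "t = (\<lambda>z. \<Sum>(a, b)\<in>S. c (a, b) * wedge a b z)"
    unfolding ext2_def by blast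
  let ?U = "\<Union>(a, b)\<in>S. {k. a k \<noteq> 0} \<times> {k. b k \<noteq> 0} \<union> {k. b k \<noteq> 0} \<times> {k. a k \<noteq> 0}"
  have "{z. t z \<noteq> 0} \<subseteq> ?U"
  proof
    fix z :: "int \<times> int" assume "z \<in> {z. t z \<noteq> 0}"
    then have "(\<Sum>(a, b)\<in>S. c (a, b) * wedge a b z) \<noteq> 0" by (simp add: t)
    then obtain w where "w \<in> S" and nz: "(case w of (a, b) \<Rightarrow> c (a, b) * wedge a b z) \<noteq> 0"
      by (rule sum.not_neutral_contains_not_neutral)
    obtain a b where w: "w = (a, b)" by (cases w)
    obtain p q where z: "z = (p, q)" by (cases z)
    from nz have "a p \<noteq> 0 \<and> b q \<noteq> 0 \<or> b p \<noteq> 0 \<and> a q \<noteq> 0"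
      by (auto simp: w z wedge_def tens_def)
    with \<open>w \<in> S\<close> show "z \<in> ?U" unfolding w z by blast
  qed
  moreover have "finite ?U"
    using fin_S S by (intro finite_UN_I) (auto simp: witt_def)
  ultimately show ?thesis by (rule finite_subset)
qed

lemma ext2_antisym:
  assumes "t \<in> ext2"
  shows "t (q, p) = - t (p, q)"
proof -
  from assms obtain S c where t: "t = (\<lambda>z. \<Sum>(a, b)\<in>S. c (a, b) * wedge a b z)"
    unfolding ext2_def by blast
  have "(\<Sum>(a, b)\<in>S. c (a, b) * wedge a b (q, p)) = (\<Sum>w\<in>S. - (case w of (a, b) \<Rightarrow> c (a, b) * wedge a b (p, q)))"
    by (rule sum.cong) (auto simp: wedge_def tens_def algebra_simps)
  then show ?thesis by (simp add: t sum_negf)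
qed

lemma wedge_L_L:
  "wedge (L i) (L j) (p, q) = (if (i, j) = (p, q) then 1 else 0) - (if (i, j) = (q, p) then 1 else 0)"
  unfolding wedge_def tens_def L_def by (cases "p = i"; cases "q = j"; cases "q = i"; cases "p = j") auto

text \<open>An antisymmetric array is \<open>\<Sum> t\<^sub>i\<^sub>j/2 \<cdot> L\<^sub>i \<and> L\<^sub>j\<close>.\<close>
lemma ext2_intro:
  assumes fin: "fin_supp t" and anti: "\<And>p q. t (q, p) = - t (p, q)"
  shows "t \<in> ext2"
proof -
  define f where "f = (\<lambda>(i, j). (L i, L j))"
  define S where "S = f ` {z. t z \<noteq> 0}"
  define c where "c = (\<lambda>(a, b). t (inv L a, inv L b) / 2)"
  have inj_f: "inj_on f {z. t z \<noteq> 0}"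
  proof (rule inj_onI)
    fix v w assume "f v = f w"
    moreover obtain i j i' j' where "v = (i, j)" "w = (i', j')" by (cases v, cases w)
    ultimately show "v = w" using injD[OF inj_L] by (simp add: f_def)
  qed
  have "t z = (\<Sum>(a, b)\<in>S. c (a, b) * wedge a b z)" for z
  proof (cases z)
    case (Pair p q)
    have summand: "(case f v of (a, b) \<Rightarrow> c (a, b) * wedge a b z)
        = t v * (if v = (p, q) then 1 else 0) / 2 - t v * (if v = (q, p) then 1 else 0) / 2" for v
    proof (cases v)
      case (Pair i j)
      have "f v = (L i, L j)" "c (L i, L j) = t v / 2"
        by (simp_all add: f_def c_def Pair inv_f_f[OF inj_L])
      then have "(case f v of (a, b) \<Rightarrow> c (a, b) * wedge a b z)
          = t v / 2 * ((if v = (p, q) then 1 else 0) - (if v = (q, p) then 1 else 0))"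
        using wedge_L_L[of i j p q] by (simp only: prod.case Pair \<open>z = (p, q)\<close>)
      also have "\<dots> = t v * (if v = (p, q) then 1 else 0) / 2 - t v * (if v = (q, p) then 1 else 0) / 2"
        by (simp only: right_diff_distrib times_divide_eq_left mult.commute)
      finally show ?thesis .
    qed
    have "(\<Sum>(a, b)\<in>S. c (a, b) * wedge a b z)
        = (\<Sum>v\<in>{z. t z \<noteq> 0}. t v * (if v = (p, q) then 1 else 0) / 2 - t v * (if v = (q, p) then 1 else 0) / 2)"
      unfolding S_def sum.reindex[OF inj_f] comp_def summand ..
    also have "\<dots> = t (p, q) / 2 - t (q, p) / 2"
      by (simp add: sum_subtractf sum_divide_distrib[symmetric] sum_mult_indicator[OF fin])
    also have "\<dots> = t z" using anti[of q p] by (simp add: Pair)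
    finally show ?thesis by simp
  qed
  moreover have "finite S" using fin by (simp add: S_def)
  moreover have "S \<subseteq> witt \<times> witt" by (auto simp: S_def f_def L_in_witt)
  ultimately show ?thesis unfolding ext2_def by blast
qed

lemma linear_on_sum_L:
  fixes \<delta> :: "(int \<Rightarrow> complex) \<Rightarrow> (int \<times> int \<Rightarrow> complex)"
  assumes add: "\<forall>x\<in>witt. \<forall>y\<in>witt. \<delta> (\<lambda>k. x k + y k) = (\<lambda>p. \<delta> x p + \<delta> y p)"
    and scal: "\<forall>c. \<forall>x\<in>witt. \<delta> (\<lambda>k. c * x k) = (\<lambda>p. c * \<delta> x p)"
    and "finite A"
  shows "\<delta> (\<lambda>k. \<Sum>m\<in>A. a m * L m k) = (\<lambda>z. \<Sum>m\<in>A. a m * \<delta> (L m) z)"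
  using \<open>finite A\<close>
proof (induction A rule: finite_induct)
  case empty
  have "\<delta> (\<lambda>k. 0 * L 0 k) = (\<lambda>p. 0 * \<delta> (L 0) p)" using scal L_in_witt by blast
  then show ?case by simp
next
  case (insert b A)
  have in_witt: "(\<lambda>k. a b * L b k) \<in> witt" "(\<lambda>k. \<Sum>m\<in>A. a m * L m k) \<in> witt"
    using sum_L_in_witt[of "{b}" a] sum_L_in_witt[OF insert(1)] by simp_all
  have "\<delta> (\<lambda>k. \<Sum>m\<in>insert b A. a m * L m k) = \<delta> (\<lambda>k. a b * L b k + (\<Sum>m\<in>A. a m * L m k))"
    using insert(1,2) by simp
  also have "\<dots> = (\<lambda>p. \<delta> (\<lambda>k. a b * L b k) p + \<delta> (\<lambda>k. \<Sum>m\<in>A. a m * L m k) p)"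
    using add[rule_format, OF in_witt] by simp
  also have "\<delta> (\<lambda>k. a b * L b k) = (\<lambda>p. a b * \<delta> (L b) p)" using scal L_in_witt by blast
  finally show ?case using insert(1,2,3) by simp
qed

lemma Lcocycle_basis_restriction:
  fixes \<delta> :: "(int \<Rightarrow> complex) \<Rightarrow> (int \<times> int \<Rightarrow> complex)"
  assumes maps: "\<forall>x\<in>witt. \<delta> x \<in> ext2"
    and scal: "\<forall>c. \<forall>x\<in>witt. \<delta> (\<lambda>k. c * x k) = (\<lambda>p. c * \<delta> x p)"
    and cocycle: "\<forall>x\<in>witt. \<forall>y\<in>witt. \<delta> (wbr x y) = (\<lambda>p. act x (\<delta> y) p - act y (\<delta> x) p)"
  shows "Lcocycle (\<lambda>m. \<delta> (L m))"
  unfolding Lcocycle_def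
proof (intro allI)
  fix m n z
  have "(\<lambda>p. of_int (m - n) * \<delta> (L (m + n)) p) = \<delta> (wbr (L m) (L n))"
    unfolding wbr_L_L using scal L_in_witt by (metis (no_types))
  also have "\<dots> = (\<lambda>p. act (L m) (\<delta> (L n)) p - act (L n) (\<delta> (L m)) p)"
    using cocycle L_in_witt by blast
  finally have "of_int (m - n) * \<delta> (L (m + n)) z = act (L m) (\<delta> (L n)) z - act (L n) (\<delta> (L m)) z"
    by (rule fun_cong)
  moreover have "fin_supp (\<delta> (L k))" for k using maps L_in_witt fin_supp_ext2 by blast
  ultimately show "of_int (m - n) * \<delta> (L (m + n)) z = Lact m (\<delta> (L n)) z - Lact n (\<delta> (L m)) z"
    by (simp add: act_L)
qed

lemma linear_eq_act_if_eq_on_L: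
  fixes \<delta> :: "(int \<Rightarrow> complex) \<Rightarrow> (int \<times> int \<Rightarrow> complex)"
  assumes add: "\<forall>x\<in>witt. \<forall>y\<in>witt. \<delta> (\<lambda>k. x k + y k) = (\<lambda>p. \<delta> x p + \<delta> y p)"
    and scal: "\<forall>c. \<forall>x\<in>witt. \<delta> (\<lambda>k. c * x k) = (\<lambda>p. c * \<delta> x p)"
    and on_L: "\<And>m. \<delta> (L m) = act (L m) r" and "x \<in> witt"
  shows "\<delta> x = act x r"
proof -
  have fin_x: "finite {m. x m \<noteq> 0}" using \<open>x \<in> witt\<close> by (simp add: witt_def)
  have "\<delta> x = \<delta> (\<lambda>k. \<Sum>m\<in>{m. x m \<noteq> 0}. x m * L m k)" using witt_eq_sum_L[OF \<open>x \<in> witt\<close>] by simp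
  also have "\<dots> = (\<lambda>z. \<Sum>m\<in>{m. x m \<noteq> 0}. x m * act (L m) r z)"
    by (simp add: linear_on_sum_L[OF add scal fin_x] on_L)
  also have "\<dots> = act x r" by (rule ext) (rule act_linear[OF \<open>x \<in> witt\<close>, symmetric])
  finally show ?thesis .
qed

theorem theorem1:
  fixes \<delta> :: "(int \<Rightarrow> complex) \<Rightarrow> (int \<times> int \<Rightarrow> complex)"
  assumes maps: "\<forall>x\<in>witt. \<delta> x \<in> ext2"
    and add: "\<forall>x\<in>witt. \<forall>y\<in>witt. \<delta> (\<lambda>k. x k + y k) = (\<lambda>p. \<delta> x p + \<delta> y p)"
    and scal: "\<forall>c. \<forall>x\<in>witt. \<delta> (\<lambda>k. c * x k) = (\<lambda>p. c * \<delta> x p)"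
    and cocycle: "\<forall>x\<in>witt. \<forall>y\<in>witt.
                    \<delta> (wbr x y) = (\<lambda>p. act x (\<delta> y) p - act y (\<delta> x) p)"
  shows "\<exists>r\<in>ext2. \<forall>x\<in>witt. \<delta> x = act x r"
proof -
  have ext2_L: "\<delta> (L m) \<in> ext2" for m using maps L_in_witt by blast
  obtain r where fin_r: "fin_supp r" and anti_r: "\<forall>p q. r (q, p) = - r (p, q)"
    and on_L: "\<And>m. \<delta> (L m) = Lact m r"
    using Lcocycle_coboundary_antisym[OF fin_supp_ext2[OF ext2_L]
        Lcocycle_basis_restriction[OF maps scal cocycle] ext2_antisym[OF ext2_L]]
    by blast
  have "r \<in> ext2" using ext2_intro[OF fin_r] anti_r by blast
  moreover have "\<delta> x = act x r" if "x \<in> witt" for x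
    using linear_eq_act_if_eq_on_L[OF add scal _ that] on_L act_L[OF fin_r] by simp
  ultimately show ?thesis by blast
qed

end
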